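(* For every $N\ge 2$ and every $x\in\{0,\dots,N-2\}$, $$|2p(x)-1|\le 3\,\frac{N-x-1}{(N-x)!}\le\frac{3}{(N-x-1)!}.$$ In particular, if $N\ge 4$, then $\frac14\le p(x)\le\frac34$ for all $x\in\{0,\dots,N-4\}$.
   Context: For $\sigma\in\mathcal{S}_N$, $\eta_1(\sigma)$ is the number of fixed points and $\eta_2(\sigma)$ the number of 2-cycles of $\sigma$; $\nu$ is the uniform measure on $\mathcal{S}_N$, and for $x\in\{0,\dots,N\}\setminus\{N-1\}$, $p(x)=\mathbb{E}_\nu[\eta_2\mid\eta_1=x]$. *)

theory Defs
  imports "HOL-Combinatorics.Permutations" "HOL-Probability.Probability"
begin

definition SN :: "nat \<Rightarrow> (nat \<Rightarrow> nat) set" where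
  "SN N = {\<sigma>. \<sigma> permutes {..<N}}"

definition eta1 :: "nat \<Rightarrow> (nat \<Rightarrow> nat) \<Rightarrow> nat" where
  "eta1 N \<sigma> = card {i \<in> {..<N}. \<sigma> i = i}"

definition eta2 :: "nat \<Rightarrow> (nat \<Rightarrow> nat) \<Rightarrow> nat" where
  "eta2 N \<sigma> = card {{i, \<sigma> i} | i. i \<in> {..<N} \<and> \<sigma> i \<noteq> i \<and> \<sigma> (\<sigma> i) = i}"

text \<open>p(x) = E_nu[eta2 | eta1 = x], nu uniform on S_N. Conditioning the uniform
  measure on the event {eta1 = x} gives the uniform measure on that event.\<close>
definition p :: "nat \<Rightarrow> nat \<Rightarrow> real" where
  "p N x = measure_pmf.expectation (pmf_of_set {\<sigma> \<in> SN N. eta1 N \<sigma> = x})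
             (\<lambda>\<sigma>. real (eta2 N \<sigma>))"

end

theory Submission
  imports Defs
begin

text \<open>Write D(m) for the number of derangements of an m-element set. The permutations of
  {..<N} with exactly x fixed points number C(N,x) D(N-x), and double counting the pairs
  (\<sigma>, 2-cycle of \<sigma>) shows that together they have C(N,2) C(N-2,x) D(N-x-2) two-cycles.
  Hence 2 p(x) = m (m-1) D(m-2) / D(m) with m = N - x. The recurrence
  D(m) = (m-1) (D(m-1) + D(m-2)) gives m (m-1) D(m-2) - D(m) = (m-1) (-1)^m, so
  |2 p(x) - 1| = (m-1) / D(m), and D(m) \<ge> m!/3 for m \<ge> 2 yields the bounds.\<close>

definition subfactorial :: "nat \<Rightarrow> real" where
  "subfactorial n = fact n * (\<Sum>j\<le>n. (-1)^j / fact j)"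

lemma subfactorial_Suc: "subfactorial (Suc n) = Suc n * subfactorial n + (-1)^Suc n"
proof -
  have "subfactorial (Suc n) = fact (Suc n) * (\<Sum>j\<le>n. (-1)^j / fact j)
      + fact (Suc n) * ((-1)^Suc n / fact (Suc n))"
    unfolding subfactorial_def by (simp only: sum.atMost_Suc distrib_left)
  then show ?thesis
    by (simp add: subfactorial_def fact_Suc)
qed

lemma subfactorial_Suc_Suc: "subfactorial (Suc (Suc n)) = Suc n * (subfactorial (Suc n) + subfactorial n)"
  by (simp add: subfactorial_Suc algebra_simps)

lemma subfactorial_Suc_Suc_defect:
  "Suc (Suc n) * Suc n * subfactorial n - subfactorial (Suc (Suc n)) = Suc n * (-1::real)^n"
  by (simp add: subfactorial_Suc algebra_simps)

lemma fact_div_3_le_subfactorial: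
  assumes "2 \<le> m" shows "fact m / 3 \<le> subfactorial m"
proof -
  have "fact (n + 2) / 3 \<le> subfactorial (n + 2) \<and> fact (n + 3) / 3 \<le> subfactorial (n + 3)" for n
  proof (induction n)
    case 0
    show ?case by (simp add: subfactorial_def numeral_eq_Suc)
  next
    case (Suc n)
    have "fact (n + 4) / 3 = real (n + 3) * (fact (n + 3) / 3 + fact (n + 2) / 3)"
      by (simp add: numeral_eq_Suc field_simps)
    also have "\<dots> \<le> real (n + 3) * (subfactorial (n + 3) + subfactorial (n + 2))"
      using Suc.IH by (intro mult_left_mono) auto
    also have "\<dots> = subfactorial (n + 4)"
      using subfactorial_Suc_Suc[of "n + 2"] by (simp add: numeral_eq_Suc)
    finally show ?case using Suc.IH by (simp add: numeral_eq_Suc)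
  qed
  moreover obtain n where "m = n + 2"
    using assms le_Suc_ex by (metis add.commute)
  ultimately show ?thesis by blast
qed

lemma subfactorial_pos: "2 \<le> m \<Longrightarrow> 0 < subfactorial m"
  using fact_div_3_le_subfactorial[of m] fact_gt_zero[of m, where 'a=real] by linarith

lemma sum_binomial_subfactorial: "(\<Sum>k\<le>n. real (n choose k) * subfactorial k) = fact n"
proof -
  define f :: "nat \<Rightarrow> nat \<Rightarrow> real" where "f j i = (-1)^j / (fact j * fact i)" for j i
  have "(\<Sum>k\<le>n. real (n choose k) * subfactorial k) = fact n * (\<Sum>k\<le>n. \<Sum>j\<le>k. f j (n - k))"
    unfolding subfactorial_def f_def sum_distrib_left
    by (intro sum.cong refl) (simp add: binomial_fact field_simps)
  also have "(\<Sum>k\<le>n. \<Sum>j\<le>k. f j (n - k)) = (\<Sum>(j, i)\<in>{(j, i). j + i \<le> n}. f j i)"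
    unfolding sum.Sigma[OF finite_atMost ballI[OF finite_atMost]]
    by (rule sum.reindex_bij_witness[where i="\<lambda>(j, i). (n - i, j)" and j="\<lambda>(k, j). (j, n - k)"]) auto
  also have "\<dots> = (\<Sum>s\<le>n. \<Sum>j\<le>s. f j (s - j))"
    by (rule sum.triangle_reindex_eq)
  also have "\<dots> = (\<Sum>s\<le>n. if s = 0 then 1 else 0)"
  proof (intro sum.cong refl)
    fix s
    have "(\<Sum>j\<le>s. f j (s - j)) = (\<Sum>j\<le>s. (-1)^j * real (s choose j)) / fact s"
      unfolding f_def sum_divide_distrib by (intro sum.cong refl) (simp add: binomial_fact)
    then show "(\<Sum>j\<le>s. f j (s - j)) = (if s = 0 then 1 else 0)"
      using choose_alternating_sum[of s, where 'a=real] by (auto simp: f_def)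
  qed
  finally show ?thesis by simp
qed

definition derangements :: "'a set \<Rightarrow> ('a \<Rightarrow> 'a) set" where
  "derangements V = {\<sigma>. \<sigma> permutes V \<and> (\<forall>i\<in>V. \<sigma> i \<noteq> i)}"

definition fixed_points :: "'a set \<Rightarrow> ('a \<Rightarrow> 'a) \<Rightarrow> 'a set" where
  "fixed_points V \<sigma> = {i \<in> V. \<sigma> i = i}"

lemma finite_permutations_with:
  "finite V \<Longrightarrow> finite {\<sigma>. \<sigma> permutes V \<and> P \<sigma>}"
  by (rule finite_subset[OF _ finite_permutations]) auto

lemma card_eq_sum_card_fibres:
  assumes "finite A" "finite T" "g ` A \<subseteq> T"
  shows "card A = (\<Sum>t\<in>T. card {a \<in> A. g a = t})"
  using sum.group[OF assms, of "\<lambda>_. 1::nat"] by simp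

lemma permutes_fixed_points_eq_derangements:
  assumes "F \<subseteq> V"
  shows "{\<sigma>. \<sigma> permutes V \<and> fixed_points V \<sigma> = F} = derangements (V - F)"
proof (intro set_eqI iffI)
  fix \<sigma> assume "\<sigma> \<in> {\<sigma>. \<sigma> permutes V \<and> fixed_points V \<sigma> = F}"
  then have \<sigma>: "\<sigma> permutes V" and F: "fixed_points V \<sigma> = F" by auto
  have "\<sigma> permutes (V - F)"
    using \<sigma> F unfolding permutes_def fixed_points_def by blast
  with F show "\<sigma> \<in> derangements (V - F)"
    by (auto simp: derangements_def fixed_points_def)
next
  fix \<sigma> assume "\<sigma> \<in> derangements (V - F)"
  then have \<sigma>: "\<sigma> permutes (V - F)" and "\<forall>i\<in>V - F. \<sigma> i \<noteq> i"
    by (auto simp: derangements_def)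
  with assms show "\<sigma> \<in> {\<sigma>. \<sigma> permutes V \<and> fixed_points V \<sigma> = F}"
    by (auto simp: fixed_points_def permutes_not_in intro: permutes_subset)
qed

lemma fact_card_eq_sum_card_derangements:
  assumes "finite V"
  shows "fact (card V) = (\<Sum>G\<in>Pow V. real (card (derangements G)))"
proof -
  have "fact (card V) = real (card {\<sigma>. \<sigma> permutes V})"
    using card_permutations[OF refl assms] by simp
  also have "card {\<sigma>. \<sigma> permutes V}
      = (\<Sum>F\<in>Pow V. card {\<sigma> \<in> {\<sigma>. \<sigma> permutes V}. fixed_points V \<sigma> = F})"
    by (rule card_eq_sum_card_fibres) (auto simp: assms finite_permutations fixed_points_def)
  also have "\<dots> = (\<Sum>F\<in>Pow V. real (card (derangements (V - F))))"
    unfolding of_nat_sum by (intro sum.cong refl) (simp add: permutes_fixed_points_eq_derangements)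
  also have "\<dots> = (\<Sum>G\<in>Pow V. real (card (derangements G)))"
    by (rule sum.reindex_bij_witness[where i="\<lambda>F. V - F" and j="\<lambda>F. V - F"]) auto
  finally show ?thesis .
qed

lemma sum_Pow_card:
  assumes "finite V"
  shows "(\<Sum>G\<in>Pow V. h (card G)) = (\<Sum>k\<le>card V. real (card V choose k) * (h k :: real))"
proof -
  have "(\<Sum>G\<in>Pow V. h (card G)) = (\<Sum>k\<le>card V. \<Sum>G\<in>{G\<in>Pow V. card G = k}. h (card G))"
    by (rule sum.group[symmetric]) (use assms in \<open>auto intro: card_mono\<close>)
  also have "\<dots> = (\<Sum>k\<le>card V. real (card V choose k) * h k)"
    using n_subsets[OF assms] by (intro sum.cong refl) (simp add: Pow_def conj_commute)
  finally show ?thesis .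
qed

text \<open>Classifying the permutations of V by their fixed points shows that |V|! is the sum of
  the numbers of derangements of all subsets of V; the closed form satisfies the same binomial
  relation, so strong induction on |V| identifies the two.\<close>
lemma card_derangements:
  "finite V \<Longrightarrow> real (card (derangements V)) = subfactorial (card V)"
proof (induction "card V" arbitrary: V rule: less_induct)
  case less
  have IH: "real (card (derangements G)) = subfactorial (card G)" if "G \<in> Pow V - {V}" for G
  proof -
    have "G \<subset> V" using that by auto
    then have "card G < card V" "finite G"
      using less.prems by (auto intro: psubset_card_mono finite_subset)
    then show ?thesis using less.hyps by blast
  qed
  have "real (card (derangements V)) + (\<Sum>G\<in>Pow V - {V}. subfactorial (card G)) = fact (card V)"
    using fact_card_eq_sum_card_derangements[OF less.prems] less.prems IH
    by (simp add: sum.remove[of "Pow V" V])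
  also have "\<dots> = subfactorial (card V) + (\<Sum>G\<in>Pow V - {V}. subfactorial (card G))"
    using sum_Pow_card[OF less.prems, of subfactorial] less.prems
    by (simp add: sum_binomial_subfactorial sum.remove[of "Pow V" V])
  finally show ?case by simp
qed

lemma card_permutes_card_fixed_points:
  assumes "finite V" "x \<le> card V"
  shows "real (card {\<sigma>. \<sigma> permutes V \<and> card (fixed_points V \<sigma>) = x})
       = real (card V choose x) * subfactorial (card V - x)"
proof -
  let ?A = "{\<sigma>. \<sigma> permutes V \<and> card (fixed_points V \<sigma>) = x}"
  let ?T = "{F. F \<subseteq> V \<and> card F = x}"
  have "card ?A = (\<Sum>F\<in>?T. card {\<sigma>\<in>?A. fixed_points V \<sigma> = F})"
    by (rule card_eq_sum_card_fibres) (auto simp: assms finite_permutations_with fixed_points_def)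
  then have "real (card ?A) = (\<Sum>F\<in>?T. real (card {\<sigma>\<in>?A. fixed_points V \<sigma> = F}))"
    by simp
  also have "\<dots> = (\<Sum>F\<in>?T. subfactorial (card V - x))"
  proof (intro sum.cong refl)
    fix F assume F: "F \<in> ?T"
    then have "{\<sigma>\<in>?A. fixed_points V \<sigma> = F} = derangements (V - F)"
      by (auto simp flip: permutes_fixed_points_eq_derangements)
    moreover have "card (V - F) = card V - x"
      using F assms by (auto simp: card_Diff_subset finite_subset)
    ultimately show "real (card {\<sigma>\<in>?A. fixed_points V \<sigma> = F}) = subfactorial (card V - x)"
      using assms by (simp add: card_derangements)
  qed
  also have "\<dots> = real (card V choose x) * subfactorial (card V - x)"
    using n_subsets[OF assms(1), of x] by simp
  finally show ?thesis .
qed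

lemma permutes_swapping_eq_transpose_image:
  assumes "a \<in> V" "b \<in> V" "a \<noteq> b"
  shows "{\<sigma>. \<sigma> permutes V \<and> \<sigma> a = b \<and> \<sigma> b = a}
       = (\<lambda>\<tau>. Transposition.transpose a b \<circ> \<tau>) ` {\<tau>. \<tau> permutes (V - {a, b})}"
proof (intro set_eqI iffI)
  fix \<sigma> assume "\<sigma> \<in> {\<sigma>. \<sigma> permutes V \<and> \<sigma> a = b \<and> \<sigma> b = a}"
  then have \<sigma>: "\<sigma> permutes V" "\<sigma> a = b" "\<sigma> b = a" by auto
  define \<tau> where "\<tau> = Transposition.transpose a b \<circ> \<sigma>"
  have "\<tau> permutes V"
    unfolding \<tau>_def by (rule permutes_compose[OF \<sigma>(1) permutes_swap_id]) (use assms in auto)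
  moreover have "\<tau> a = a" "\<tau> b = b" using \<sigma> by (auto simp: \<tau>_def)
  ultimately have "\<tau> permutes (V - {a, b})"
    unfolding permutes_def by (metis Diff_iff insertE singletonD)
  moreover have "\<sigma> = Transposition.transpose a b \<circ> \<tau>" by (simp add: \<tau>_def fun_eq_iff)
  ultimately show "\<sigma> \<in> (\<lambda>\<tau>. Transposition.transpose a b \<circ> \<tau>) ` {\<tau>. \<tau> permutes (V - {a, b})}" by blast
next
  fix \<sigma> assume "\<sigma> \<in> (\<lambda>\<tau>. Transposition.transpose a b \<circ> \<tau>) ` {\<tau>. \<tau> permutes (V - {a, b})}"
  then obtain \<tau> where \<sigma>: "\<sigma> = Transposition.transpose a b \<circ> \<tau>" and \<tau>: "\<tau> permutes (V - {a, b})" by auto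
  have "\<tau> permutes V" using \<tau> by (rule permutes_subset) auto
  then have "\<sigma> permutes V"
    unfolding \<sigma> by (rule permutes_compose[OF _ permutes_swap_id]) (use assms in auto)
  moreover have "\<tau> a = a" "\<tau> b = b" using \<tau> by (auto simp: permutes_not_in)
  ultimately show "\<sigma> \<in> {\<sigma>. \<sigma> permutes V \<and> \<sigma> a = b \<and> \<sigma> b = a}" by (simp add: \<sigma>)
qed

lemma fixed_points_transpose_comp:
  assumes "\<tau> permutes (V - {a, b})" "a \<noteq> b"
  shows "fixed_points V (Transposition.transpose a b \<circ> \<tau>) = fixed_points (V - {a, b}) \<tau>"
proof -
  have "Transposition.transpose a b (\<tau> i) = i \<longleftrightarrow> i \<notin> {a, b} \<and> \<tau> i = i" if "i \<in> V" for i
  proof (cases "i \<in> {a, b}")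
    case True
    then show ?thesis using assms by (auto simp: permutes_not_in)
  next
    case False
    then have "\<tau> i \<notin> {a, b}" using that permutes_in_image[OF assms(1)] by blast
    then show ?thesis using False by simp
  qed
  then show ?thesis by (auto simp: fixed_points_def)
qed

lemma card_permutes_swapping_card_fixed_points:
  assumes "finite V" "a \<in> V" "b \<in> V" "a \<noteq> b" "x + 2 \<le> card V"
  shows "real (card {\<sigma>. \<sigma> permutes V \<and> \<sigma> a = b \<and> \<sigma> b = a \<and> card (fixed_points V \<sigma>) = x})
       = real ((card V - 2) choose x) * subfactorial (card V - 2 - x)"
proof -
  let ?W = "V - {a, b}" and ?t = "\<lambda>\<tau>. Transposition.transpose a b \<circ> \<tau>"
  have "{\<sigma>. \<sigma> permutes V \<and> \<sigma> a = b \<and> \<sigma> b = a \<and> card (fixed_points V \<sigma>) = x}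
      = {\<sigma> \<in> {\<sigma>. \<sigma> permutes V \<and> \<sigma> a = b \<and> \<sigma> b = a}. card (fixed_points V \<sigma>) = x}"
    by blast
  also have "\<dots> = {\<sigma> \<in> ?t ` {\<tau>. \<tau> permutes ?W}. card (fixed_points V \<sigma>) = x}"
    by (simp only: permutes_swapping_eq_transpose_image[OF assms(2-4)])
  also have "\<dots> = ?t ` {\<tau>. \<tau> permutes ?W \<and> card (fixed_points ?W \<tau>) = x}"
    using fixed_points_transpose_comp[OF _ assms(4)] by auto
  finally have eq: "{\<sigma>. \<sigma> permutes V \<and> \<sigma> a = b \<and> \<sigma> b = a \<and> card (fixed_points V \<sigma>) = x}
      = ?t ` {\<tau>. \<tau> permutes ?W \<and> card (fixed_points ?W \<tau>) = x}" .
  have "inj ?t"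
  proof (rule injI)
    fix u v assume "Transposition.transpose a b \<circ> u = Transposition.transpose a b \<circ> v"
    then show "u = v" by (metis fun_eq_iff comp_apply transpose_involutory)
  qed
  then have "card (?t ` {\<tau>. \<tau> permutes ?W \<and> card (fixed_points ?W \<tau>) = x})
      = card {\<tau>. \<tau> permutes ?W \<and> card (fixed_points ?W \<tau>) = x}"
    by (rule card_image[OF inj_on_subset]) simp
  moreover have "card ?W = card V - 2" using assms by (simp add: card_Diff_subset)
  ultimately show ?thesis
    using eq card_permutes_card_fixed_points[of ?W x] assms by simp
qed

lemma sum_card_eq_sum_card_containing:
  assumes "finite S" "finite P" "\<And>s. s \<in> S \<Longrightarrow> C s \<subseteq> P"
  shows "(\<Sum>s\<in>S. card (C s)) = (\<Sum>T\<in>P. card {s \<in> S. T \<in> C s})"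
proof -
  have "(\<Sum>s\<in>S. card (C s)) = (\<Sum>s\<in>S. \<Sum>T\<in>P. if T \<in> C s then 1 else 0)"
    using assms by (intro sum.cong refl) (simp add: sum.If_cases Int_absorb1)
  also have "\<dots> = (\<Sum>T\<in>P. \<Sum>s\<in>S. if T \<in> C s then 1 else 0)"
    by (rule sum.swap)
  also have "\<dots> = (\<Sum>T\<in>P. card {s \<in> S. T \<in> C s})"
    using assms by (simp add: sum.If_cases Int_def)
  finally show ?thesis .
qed

lemma doubleton_mem_two_cycles_iff:
  assumes "a \<in> A" "a \<noteq> b"
  shows "{a, b} \<in> {{i, \<sigma> i} | i. i \<in> A \<and> \<sigma> i \<noteq> i \<and> \<sigma> (\<sigma> i) = i} \<longleftrightarrow> \<sigma> a = b \<and> \<sigma> b = a"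
proof
  assume "{a, b} \<in> {{i, \<sigma> i} | i. i \<in> A \<and> \<sigma> i \<noteq> i \<and> \<sigma> (\<sigma> i) = i}"
  then obtain i where "{a, b} = {i, \<sigma> i}" "\<sigma> (\<sigma> i) = i" by blast
  then show "\<sigma> a = b \<and> \<sigma> b = a" by (auto simp: doubleton_eq_iff)
next
  assume "\<sigma> a = b \<and> \<sigma> b = a"
  with assms have "{a, b} = {a, \<sigma> a} \<and> a \<in> A \<and> \<sigma> a \<noteq> a \<and> \<sigma> (\<sigma> a) = a" by simp
  then show "{a, b} \<in> {{i, \<sigma> i} | i. i \<in> A \<and> \<sigma> i \<noteq> i \<and> \<sigma> (\<sigma> i) = i}" by blast
qed

lemma eta1_fibre_eq:
  "{\<sigma> \<in> SN N. eta1 N \<sigma> = x} = {\<sigma>. \<sigma> permutes {..<N} \<and> card (fixed_points {..<N} \<sigma>) = x}"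
  by (auto simp: SN_def eta1_def fixed_points_def)

lemma card_eta1_fibre:
  assumes "x \<le> N"
  shows "real (card {\<sigma> \<in> SN N. eta1 N \<sigma> = x}) = real (N choose x) * subfactorial (N - x)"
  using card_permutes_card_fixed_points[of "{..<N}" x] assms by (simp add: eta1_fibre_eq)

lemma sum_eta2_eta1_fibre:
  assumes "x + 2 \<le> N"
  shows "(\<Sum>\<sigma> \<in> {\<sigma> \<in> SN N. eta1 N \<sigma> = x}. real (eta2 N \<sigma>))
       = real (N choose 2) * real ((N - 2) choose x) * subfactorial (N - 2 - x)"
proof -
  let ?S = "{\<sigma> \<in> SN N. eta1 N \<sigma> = x}" and ?P = "{T. T \<subseteq> {..<N} \<and> card T = 2}"
  let ?C = "\<lambda>\<sigma>. {{i, \<sigma> i} | i. i \<in> {..<N} \<and> \<sigma> i \<noteq> i \<and> \<sigma> (\<sigma> i) = i}"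
  have "finite ?S"
    unfolding eta1_fibre_eq by (rule finite_permutations_with) simp
  have "?C \<sigma> \<subseteq> ?P" if "\<sigma> \<in> ?S" for \<sigma>
  proof
    fix T assume "T \<in> ?C \<sigma>"
    then obtain i where i: "T = {i, \<sigma> i}" "i < N" "\<sigma> i \<noteq> i" by blast
    moreover have "\<sigma> i < N"
      using that i(2) permutes_in_image[of \<sigma> "{..<N}" i] by (simp add: SN_def)
    ultimately show "T \<in> ?P" by auto
  qed
  then have "(\<Sum>\<sigma>\<in>?S. eta2 N \<sigma>) = (\<Sum>T\<in>?P. card {\<sigma> \<in> ?S. T \<in> ?C \<sigma>})"
    unfolding eta2_def using \<open>finite ?S\<close> by (intro sum_card_eq_sum_card_containing) auto
  then have "(\<Sum>\<sigma>\<in>?S. real (eta2 N \<sigma>)) = (\<Sum>T\<in>?P. real (card {\<sigma> \<in> ?S. T \<in> ?C \<sigma>}))"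
    by (simp flip: of_nat_sum)
  also have "\<dots> = (\<Sum>T\<in>?P. real ((N - 2) choose x) * subfactorial (N - 2 - x))"
  proof (intro sum.cong refl)
    fix T assume "T \<in> ?P"
    then obtain a b where T: "T = {a, b}" "a \<noteq> b" "a < N" "b < N"
      by (auto simp: card_2_iff)
    then have "T \<in> ?C \<sigma> \<longleftrightarrow> \<sigma> a = b \<and> \<sigma> b = a" for \<sigma>
      using doubleton_mem_two_cycles_iff[of a "{..<N}" b \<sigma>] by simp
    then have "{\<sigma> \<in> ?S. T \<in> ?C \<sigma>}
        = {\<sigma>. \<sigma> permutes {..<N} \<and> \<sigma> a = b \<and> \<sigma> b = a \<and> card (fixed_points {..<N} \<sigma>) = x}"
      unfolding eta1_fibre_eq by blast
    then show "real (card {\<sigma> \<in> ?S. T \<in> ?C \<sigma>}) = real ((N - 2) choose x) * subfactorial (N - 2 - x)"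
      using card_permutes_swapping_card_fixed_points[of "{..<N}" a b x] T assms by simp
  qed
  also have "\<dots> = real (N choose 2) * real ((N - 2) choose x) * subfactorial (N - 2 - x)"
    using n_subsets[of "{..<N}" 2] by simp
  finally show ?thesis .
qed

lemma two_mul_choose_two_mul_choose:
  assumes "x + 2 \<le> N"
  shows "2 * (N choose 2) * ((N - 2) choose x) = (N choose x) * ((N - x) * (N - x - 1))"
proof -
  have "(N choose (N - x)) * ((N - x) choose 2) = (N choose 2) * ((N - 2) choose (N - x - 2))"
    using choose_mult[of 2 "N - x" N] assms by simp
  moreover have "N choose (N - x) = N choose x" "(N - 2) choose (N - x - 2) = (N - 2) choose x"
    using binomial_symmetric[of x N] binomial_symmetric[of x "N - 2"] assms by simp_all
  moreover have "2 * ((N - x) choose 2) = (N - x) * (N - x - 1)"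
    by (cases "N - x") (simp_all add: choose_two)
  ultimately show ?thesis by (metis mult.assoc mult.commute)
qed

lemma two_p_eq:
  assumes "x + 2 \<le> N"
  shows "2 * p N x = real ((N - x) * (N - x - 1)) * subfactorial (N - x - 2) / subfactorial (N - x)"
proof -
  let ?S = "{\<sigma> \<in> SN N. eta1 N \<sigma> = x}"
  define c where "c = real (N choose x)"
  have c: "0 < c" using assms by (simp add: c_def)
  have D: "0 < subfactorial (N - x)" using assms by (intro subfactorial_pos) simp
  have card: "real (card ?S) = c * subfactorial (N - x)"
    unfolding c_def using assms by (intro card_eta1_fibre) simp
  have "?S \<noteq> {}"
    using card c D by (metis card.empty mult_pos_pos of_nat_0 less_irrefl)
  moreover have "finite ?S"
    unfolding eta1_fibre_eq by (rule finite_permutations_with) simp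
  ultimately have "p N x = (\<Sum>\<sigma>\<in>?S. real (eta2 N \<sigma>)) / real (card ?S)"
    unfolding p_def by (rule integral_pmf_of_set)
  also have "\<dots> = real (N choose 2) * real ((N - 2) choose x) * subfactorial (N - x - 2)
      / (c * subfactorial (N - x))"
    unfolding card sum_eta2_eta1_fibre[OF assms] by (simp add: diff_right_commute)
  finally have "2 * p N x = real (2 * (N choose 2) * ((N - 2) choose x)) * subfactorial (N - x - 2)
      / (c * subfactorial (N - x))"
    by simp
  also have "\<dots> = c * real ((N - x) * (N - x - 1)) * subfactorial (N - x - 2)
      / (c * subfactorial (N - x))"
    unfolding two_mul_choose_two_mul_choose[OF assms] c_def by simp
  also have "\<dots> = real ((N - x) * (N - x - 1)) * subfactorial (N - x - 2) / subfactorial (N - x)"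
    using c by simp
  finally show ?thesis .
qed

lemma two_p_minus_one_eq:
  assumes "x + 2 \<le> N"
  shows "2 * p N x - 1 = real (N - x - 1) * (-1)^(N - x) / subfactorial (N - x)"
proof -
  define n where "n = N - x - 2"
  have n: "N - x = Suc (Suc n)" using assms by (simp add: n_def)
  have "0 < subfactorial (N - x)" using assms by (intro subfactorial_pos) simp
  moreover have "real ((N - x) * (N - x - 1)) * subfactorial (N - x - 2) - subfactorial (N - x)
      = real (N - x - 1) * (-1)^(N - x)"
    using subfactorial_Suc_Suc_defect[of n] unfolding n by simp
  ultimately show ?thesis
    unfolding two_p_eq[OF assms] by (metis diff_divide_distrib divide_self less_irrefl)
qed

lemma abs_two_p_minus_one_le:
  assumes "x + 2 \<le> N"
  shows "\<bar>2 * p N x - 1\<bar> \<le> 3 * real (N - x - 1) / fact (N - x)"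
proof -
  have m: "2 \<le> N - x" using assms by simp
  have "\<bar>2 * p N x - 1\<bar> = real (N - x - 1) / subfactorial (N - x)"
    using two_p_minus_one_eq[OF assms] subfactorial_pos[OF m] by (simp add: abs_mult power_abs)
  also have "\<dots> \<le> real (N - x - 1) / (fact (N - x) / 3)"
    using fact_div_3_le_subfactorial[OF m] subfactorial_pos[OF m] by (intro divide_left_mono) auto
  finally show ?thesis by (simp add: mult.commute)
qed

lemma mult_div_fact_le_div_fact_pred:
  fixes c :: real
  assumes "0 \<le> c" "1 \<le> m"
  shows "c * real (m - 1) / fact m \<le> c / fact (m - 1)"
proof -
  have "fact m = real m * fact (m - 1)"
    using assms(2) fact_reduce[of m] by simp
  then show ?thesis
    using assms by (simp add: field_simps mult_left_mono)
qed

theorem lemmaB1: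
  fixes N x :: nat
  assumes "2 \<le> N" and "x \<le> N - 2"
  shows "\<bar>2 * p N x - 1\<bar> \<le> 3 * real (N - x - 1) / fact (N - x)
       \<and> 3 * real (N - x - 1) / fact (N - x) \<le> 3 / fact (N - x - 1)
       \<and> (4 \<le> N \<and> x \<le> N - 4 \<longrightarrow> 1/4 \<le> p N x \<and> p N x \<le> 3/4)"
proof -
  have x: "x + 2 \<le> N" using assms by simp
  have bound1: "\<bar>2 * p N x - 1\<bar> \<le> 3 * real (N - x - 1) / fact (N - x)"
    using abs_two_p_minus_one_le[OF x] .
  have bound2: "3 * real (N - x - 1) / fact (N - x) \<le> 3 / fact (N - x - 1)"
    using mult_div_fact_le_div_fact_pred[of 3 "N - x"] x by (simp add: diff_right_commute)
  have "1/4 \<le> p N x \<and> p N x \<le> 3/4" if "4 \<le> N \<and> x \<le> N - 4"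
  proof -
    have "fact 3 \<le> (fact (N - x - 1) :: real)"
      using that by (intro fact_mono) auto
    then have "3 / fact (N - x - 1) \<le> (1/2 :: real)"
      by (simp add: fact_numeral field_simps)
    then have "\<bar>2 * p N x - 1\<bar> \<le> 1/2"
      using bound1 bound2 by linarith
    then show ?thesis by (simp only: abs_le_iff) linarith
  qed
  with bound1 bound2 show ?thesis by blast
qed

end
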